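(* Let $P(x)=\frac{p_{-1}}{x-x_0}+p_0+p_1(x-x_0)+\dots$ and $Q(x)=\frac{q_{-1}}{x-x_0}+q_0+q_1(x-x_0)+\dots$ be $n\times n$ matrix functions holomorphic and single-valued in a punctured disc around $x_0$. If for every $\rho\in\mathbb C$ the point $x_0$ is a strong regular point of the system $\frac{dW(x,\rho)}{dx}=[P(x)+\rho Q(x)]W(x,\rho)$, then for every $\rho\in\mathbb C$ all eigenvalues of $p_{-1}+\rho q_{-1}$ are integers, and the set of eigenvalues of $p_{-1}+\rho q_{-1}$ does not depend on $\rho$.
   Context: For a system $\frac{dW}{dx}=A(x)W$ with $A$ holomorphic and single-valued in a punctured disc around $x_0$, every fundamental (invertible matrix) solution has the form $W(x)=S(x)(x-x_0)^{\Phi}$ with $S$ holomorphic and single-valued in the punctured disc and $\Phi$ a constant matrix. The point $x_0$ is called strong regular for the system if a fundamental solution $W$ is single-valued in the punctured disc and has at most a pole at $x_0$, i.e. $W(x)=\sum_{k\ge m}b_k(x-x_0)^k$ for some $m\in\mathbb Z$. *)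

theory Defs
  imports "HOL-Complex_Analysis.Complex_Analysis"
begin

definition mat_holomorphic_on ::
  "(complex \<Rightarrow> complex^'n^'n) \<Rightarrow> complex set \<Rightarrow> bool" where
  "mat_holomorphic_on F S \<longleftrightarrow> (\<forall>i j. (\<lambda>x. F x $ i $ j) holomorphic_on S)"

definition mscale :: "complex \<Rightarrow> complex^'n^'n \<Rightarrow> complex^'n^'n" where
  "mscale c M = (\<chi> i j. c * M $ i $ j)"

definition mat_eigenvalue :: "complex^'n^'n \<Rightarrow> complex \<Rightarrow> bool" where
  "mat_eigenvalue M l \<longleftrightarrow> (\<exists>v. v \<noteq> 0 \<and> M *v v = l *s v)"

definition fundamental_solution_on ::
  "(complex \<Rightarrow> complex^'n^'n) \<Rightarrow> (complex \<Rightarrow> complex^'n^'n) \<Rightarrow> complex set \<Rightarrow> bool" where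
  "fundamental_solution_on A W S \<longleftrightarrow>
     (\<forall>x\<in>S. invertible (W x) \<and>
        (\<forall>i j. ((\<lambda>y. W y $ i $ j) has_field_derivative ((A x ** W x) $ i $ j)) (at x)))"

text \<open>x0 is a strong regular point of dW/dx = A(x) W: on some punctured disc around x0
  there is a single-valued fundamental solution having at most a pole at x0
  (each entry has a non-essential singularity at x0).\<close>
definition strong_regular_point ::
  "(complex \<Rightarrow> complex^'n^'n) \<Rightarrow> complex \<Rightarrow> bool" where
  "strong_regular_point A x0 \<longleftrightarrow>
     (\<exists>r>0. \<exists>W. fundamental_solution_on A W (ball x0 r - {x0}) \<and>
        (\<forall>i j. not_essential (\<lambda>x. W x $ i $ j) x0))"

end

theory Submission
  imports Defs
begin

text \<open>Fix \<open>\<rho>\<close>, write \<open>R = p\<^sub>-\<^sub>1 + \<rho> q\<^sub>-\<^sub>1\<close>, and let \<open>B\<^sub>k\<close> be the Laurent coefficients at \<open>x\<^sub>0\<close> of a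
  single-valued meromorphic fundamental solution \<open>W\<close>. If \<open>W c\<close> has order at least \<open>m\<close>, comparing the
  coefficients of \<open>(x - x\<^sub>0)\<^bsup>m-1\<^esup>\<close> in \<open>W' = (R/(x - x\<^sub>0) + holomorphic) W\<close> gives \<open>R B\<^sub>m c = m B\<^sub>m c\<close>.
  Since \<open>W\<close> is invertible, orders of nonzero vectors are bounded, so there is a basis \<open>c\<^sub>i\<close> of orders
  \<open>m\<^sub>i\<close> with maximal \<open>\<Sum> m\<^sub>i\<close>. Its leading coefficients \<open>B\<^bsub>m\<^sub>i\<^esub> c\<^sub>i\<close> are linearly independent, as a
  relation among them could be reduced to one among vectors of a single order, whose combination
  of the \<open>c\<^sub>i\<close> would have larger order. Hence \<open>R\<close> is diagonalizable with the integer eigenvalues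
  \<open>m\<^sub>i\<close>. Then \<open>tr R\<^sup>k = \<Sum> m\<^sub>i\<^sup>k\<close> is an integer-valued continuous function of \<open>\<rho>\<close>, hence constant, and
  integer families with equal power sums have equal ranges.\<close>

section \<open>Linear independence of families of vectors\<close>

definition independent_family :: "('i::finite \<Rightarrow> 'a::field^'n) \<Rightarrow> bool" where
  "independent_family v \<longleftrightarrow> (\<forall>x. (\<Sum>i\<in>UNIV. x i *s v i) = 0 \<longrightarrow> (\<forall>i. x i = 0))"

lemma independent_family_nonzero:
  fixes v :: "'i::finite \<Rightarrow> 'a::field^'n"
  assumes "independent_family v"
  shows "v i \<noteq> 0"
proof
  assume "v i = 0"
  moreover have "(\<Sum>j\<in>UNIV. (if j = i then 1 else 0) *s v j) = (\<Sum>j\<in>UNIV. if j = i then v j else 0)"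
    by (intro sum.cong) auto
  ultimately have "(\<Sum>j\<in>UNIV. (if j = i then 1 else 0) *s v j) = 0"
    by simp
  with assms have "\<forall>j. (if j = i then 1 else 0 :: 'a) = 0"
    unfolding independent_family_def by (rule spec[of _ "\<lambda>j. if j = i then 1 else 0", THEN mp])
  then show False
    by (metis one_neq_zero)
qed

lemma independent_family_update:
  assumes ind: "independent_family c" and "x j \<noteq> 0"
  shows "independent_family (c(j := \<Sum>i\<in>UNIV. x i *s c i))"
  unfolding independent_family_def
proof (intro allI impI)
  fix y k
  assume "(\<Sum>i\<in>UNIV. y i *s (c(j := \<Sum>i\<in>UNIV. x i *s c i)) i) = 0"
  moreover define z where "z i = (if i = j then 0 else y i) + y j * x i" for i
  moreover have "(\<Sum>i\<in>UNIV. y i *s (c(j := \<Sum>i\<in>UNIV. x i *s c i)) i) = (\<Sum>i\<in>UNIV. z i *s c i)"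
  proof -
    have "(\<Sum>i\<in>UNIV. y i *s (c(j := \<Sum>i\<in>UNIV. x i *s c i)) i)
        = (\<Sum>i\<in>UNIV. (if i = j then 0 else y i) *s c i) + y j *s (\<Sum>i\<in>UNIV. x i *s c i)"
      by (simp add: sum.If_cases if_distrib Diff_eq sum.remove[of UNIV j] cong: if_cong)
    also have "\<dots> = (\<Sum>i\<in>UNIV. z i *s c i)"
      by (simp add: z_def vec.scale_sum_right sum.distrib[symmetric] vector_sadd_rdistrib)
    finally show ?thesis .
  qed
  ultimately have z0: "z i = 0" for i
    using ind unfolding independent_family_def by metis
  with \<open>x j \<noteq> 0\<close> have "y j = 0"
    using z0[of j] by (simp add: z_def)
  with z0[of k] show "y k = 0"
    by (simp add: z_def split: if_splits)
qed

lemma invertible_iff_independent_columns: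
  fixes L :: "'a::field^'n^'n"
  shows "invertible L \<longleftrightarrow> independent_family (\<lambda>i. column i L)"
proof -
  have Ly: "L *v y = (\<Sum>i\<in>UNIV. y $ i *s column i L)" for y
    by (rule matrix_mult_sum)
  have "(\<forall>y. L *v y = 0 \<longrightarrow> y = 0) \<longleftrightarrow> independent_family (\<lambda>i. column i L)"
    unfolding independent_family_def
  proof safe
    fix x i
    assume "\<forall>y. L *v y = 0 \<longrightarrow> y = 0" "(\<Sum>i\<in>UNIV. x i *s column i L) = 0"
    then have "(\<chi> i. x i) = 0"
      by (simp add: Ly)
    then show "x i = 0"
      by (metis vec_lambda_beta zero_index)
  next
    fix y :: "'a^'n"
    assume "\<forall>x. (\<Sum>i\<in>UNIV. x i *s column i L) = 0 \<longrightarrow> (\<forall>i. x i = 0)" "L *v y = 0"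
    then show "y = 0"
      by (simp add: Ly vec_eq_iff)
  qed
  then show ?thesis
    by (simp add: invertible_left_inverse matrix_left_invertible_ker)
qed

lemma eigenvector_relation_single_eigenvalue:
  fixes v :: "'i::finite \<Rightarrow> 'a::field^'n" and R :: "'a^'n^'n"
  assumes eigen: "\<And>i. R *v v i = e i *s v i"
  shows "(\<Sum>i\<in>UNIV. x i *s v i) = 0 \<Longrightarrow> x i0 \<noteq> 0 \<Longrightarrow>
    \<exists>y j. (\<Sum>i\<in>UNIV. y i *s v i) = 0 \<and> y j \<noteq> 0 \<and> (\<forall>i. y i \<noteq> 0 \<longrightarrow> e i = e j)"
proof (induction "card (e ` {i. x i \<noteq> 0})" arbitrary: x i0 rule: less_induct)
  case less
  show ?case
  proof (cases "\<forall>i. x i \<noteq> 0 \<longrightarrow> e i = e i0")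
    case True
    with less.prems show ?thesis by blast
  next
    case False
    then obtain i1 where i1: "x i1 \<noteq> 0" "e i1 \<noteq> e i0" by blast
    \<comment> \<open>Applying \<open>R - e i0\<close> to the relation removes the eigenvalue \<open>e i0\<close> from its support.\<close>
    define y where "y i = (e i - e i0) * x i" for i
    have "(\<Sum>i\<in>UNIV. y i *s v i) = R *v (\<Sum>i\<in>UNIV. x i *s v i) - e i0 *s (\<Sum>i\<in>UNIV. x i *s v i)"
      by (simp add: y_def vec.sum vector_scalar_commute eigen vec.scale_sum_right
          sum_subtractf[symmetric] vector_smult_assoc algebra_simps)
    then have rel: "(\<Sum>i\<in>UNIV. y i *s v i) = 0"
      using less.prems(1) by simp
    have "e ` {i. y i \<noteq> 0} = e ` {i. x i \<noteq> 0} - {e i0}"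
      by (auto simp: y_def)
    moreover have "e i0 \<in> e ` {i. x i \<noteq> 0}"
      using less.prems(2) by blast
    ultimately have "card (e ` {i. y i \<noteq> 0}) < card (e ` {i. x i \<noteq> 0})"
      by (metis card_Diff1_less finite finite_imageI)
    moreover have "y i1 \<noteq> 0"
      using i1 by (simp add: y_def)
    ultimately show ?thesis
      using less.hyps rel by blast
  qed
qed

section \<open>Vanishing orders and maximal order bases\<close>

text \<open>With \<open>B k\<close> the Laurent coefficients of a matrix function \<open>W\<close>, \<open>vanishes_below B c m\<close> says
  that the vector function \<open>W c\<close> has order at least \<open>m\<close>.\<close>

definition vanishes_below :: "(int \<Rightarrow> 'a::semiring_1^'n^'m) \<Rightarrow> 'a^'n \<Rightarrow> int \<Rightarrow> bool" where
  "vanishes_below B c m \<longleftrightarrow> (\<forall>k<m. B k *v c = 0)"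

lemma vanishes_below_bounded:
  fixes B :: "int \<Rightarrow> complex^'n^'m"
  assumes "\<And>c. c \<noteq> 0 \<Longrightarrow> \<exists>k. B k *v c \<noteq> 0"
  shows "\<exists>M. \<forall>c m. c \<noteq> 0 \<longrightarrow> vanishes_below B c m \<longrightarrow> m \<le> M"
proof -
  have opn: "open {c. B k *v c \<noteq> 0}" for k
    by (intro open_Collect_neq continuous_intros)
  have cover: "sphere 0 1 \<subseteq> (\<Union>k. {c. B k *v c \<noteq> 0})"
  proof
    fix c :: "complex^'n"
    assume "c \<in> sphere 0 1"
    then have "c \<noteq> 0"
      by auto
    then show "c \<in> (\<Union>k. {c. B k *v c \<noteq> 0})"
      using assms by blast
  qed
  obtain D where D: "finite D" "sphere 0 1 \<subseteq> (\<Union>k\<in>D. {c. B k *v c \<noteq> 0})"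
    by (rule compactE_image[OF compact_sphere, of UNIV "\<lambda>k. {c. B k *v c \<noteq> 0}"])
      (use opn cover in auto)
  have "m \<le> Max D" if "c \<noteq> 0" "vanishes_below B c m" for c m
  proof -
    have "(1 / norm c) *\<^sub>R c \<in> sphere 0 1"
      using \<open>c \<noteq> 0\<close> by (simp add: norm_scaleR)
    then obtain k where "k \<in> D" "B k *v ((1 / norm c) *\<^sub>R c) \<noteq> 0"
      using D by blast
    moreover have "B k *v (a *\<^sub>R c) = a *\<^sub>R (B k *v c)" for a
      by (simp add: vec_eq_iff matrix_vector_mult_def scaleR_sum_right mult_scaleR_right)
    ultimately have "B k *v c \<noteq> 0" "k \<le> Max D"
      using D(1) by auto
    with \<open>vanishes_below B c m\<close> show ?thesis
      unfolding vanishes_below_def by (meson not_le order_trans)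
  qed
  then show ?thesis by blast
qed

text \<open>The lower bound \<open>K\<close> on the orders only serves to make the set of order sums finite.\<close>

definition order_basis ::
  "(int \<Rightarrow> 'a::field^'n^'n) \<Rightarrow> int \<Rightarrow> ('n \<Rightarrow> 'a^'n) \<Rightarrow> ('n \<Rightarrow> int) \<Rightarrow> bool" where
  "order_basis B K c m \<longleftrightarrow> independent_family c \<and> (\<forall>i. K \<le> m i \<and> vanishes_below B (c i) (m i))"

definition maximal_order_basis ::
  "(int \<Rightarrow> 'a::field^'n^'n) \<Rightarrow> int \<Rightarrow> ('n \<Rightarrow> 'a^'n) \<Rightarrow> ('n \<Rightarrow> int) \<Rightarrow> bool" where
  "maximal_order_basis B K c m \<longleftrightarrow>
     order_basis B K c m \<and> (\<forall>c' m'. order_basis B K c' m' \<longrightarrow> sum m' UNIV \<le> sum m UNIV)"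

lemma maximal_order_basis_exists:
  fixes B :: "int \<Rightarrow> complex^'n^'n"
  assumes "\<And>c. c \<noteq> 0 \<Longrightarrow> \<exists>k. B k *v c \<noteq> 0" and "\<And>k. k < K \<Longrightarrow> B k = 0"
  shows "\<exists>c m. maximal_order_basis B K c m"
proof -
  obtain M where M: "\<And>c m. c \<noteq> 0 \<Longrightarrow> vanishes_below B c m \<Longrightarrow> m \<le> M"
    using vanishes_below_bounded[OF assms(1)] by blast
  define S where "S = {sum m UNIV | c m. order_basis B K c m}"
  have "S \<subseteq> {of_nat CARD('n) * K .. of_nat CARD('n) * M}"
  proof
    fix s
    assume "s \<in> S"
    then obtain c m where s: "s = sum m UNIV" and "order_basis B K c m"
      by (auto simp: S_def)
    then have "K \<le> m i" "m i \<le> M" for i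
      using M[of "c i" "m i"] independent_family_nonzero[of c i] by (auto simp: order_basis_def)
    then show "s \<in> {of_nat CARD('n) * K .. of_nat CARD('n) * M}"
      using s sum_bounded_above[of UNIV m M] sum_bounded_below[of UNIV K m] by simp
  qed
  then have "finite S"
    by (rule finite_subset) simp
  have "invertible (mat 1 :: complex^'n^'n)"
    by (simp add: invertible_def)
  then have "order_basis B K (\<lambda>i. column i (mat 1)) (\<lambda>i. K)"
    using assms(2) by (simp add: order_basis_def vanishes_below_def invertible_iff_independent_columns)
  then have "S \<noteq> {}"
    by (auto simp: S_def)
  with \<open>finite S\<close> have "Max S \<in> S"
    by simp
  then obtain c m where "order_basis B K c m" "sum m UNIV = Max S"
    by (auto simp: S_def)
  moreover have "sum m' UNIV \<le> Max S" if "order_basis B K c' m'" for c' m'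
    using \<open>finite S\<close> that by (intro Max_ge) (auto simp: S_def)
  ultimately show ?thesis
    unfolding maximal_order_basis_def by metis
qed

lemma maximal_order_basis_not_raisable:
  assumes max: "maximal_order_basis B K c m" and "independent_family (c(j := d))"
  shows "\<not> vanishes_below B d (m j + 1)"
proof
  assume "vanishes_below B d (m j + 1)"
  moreover have "K \<le> m j"
    using max by (simp add: maximal_order_basis_def order_basis_def)
  ultimately have "order_basis B K (c(j := d)) (m(j := m j + 1))"
    using assms by (clarsimp simp: maximal_order_basis_def order_basis_def) (smt (verit))
  moreover have "sum (m(j := m j + 1)) UNIV = sum m UNIV + 1"
    by (simp add: sum.remove[of UNIV j])
  ultimately show False
    using max unfolding maximal_order_basis_def by force
qed

lemma vanishes_below_equal_order_combination:
  fixes B :: "int \<Rightarrow> 'a::field^'n^'m" and c :: "'i::finite \<Rightarrow> 'a^'n"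
  assumes "\<And>i. vanishes_below B (c i) (m i)"
    and "\<And>i. y i \<noteq> 0 \<Longrightarrow> m i = \<mu>"
    and "(\<Sum>i\<in>UNIV. y i *s (B (m i) *v c i)) = 0"
  shows "vanishes_below B (\<Sum>i\<in>UNIV. y i *s c i) (\<mu> + 1)"
  unfolding vanishes_below_def
proof (intro allI impI)
  fix k
  assume "k < \<mu> + 1"
  have "y i *s (B k *v c i) = (if k < \<mu> then 0 else y i *s (B (m i) *v c i))" for i
  proof (cases "y i = 0")
    case False
    with assms(1,2)[of i] \<open>k < \<mu> + 1\<close> show ?thesis
      by (auto simp: vanishes_below_def)
  qed simp
  then have "B k *v (\<Sum>i\<in>UNIV. y i *s c i) = (if k < \<mu> then 0 else (\<Sum>i\<in>UNIV. y i *s (B (m i) *v c i)))"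
    by (simp add: vec.sum vector_scalar_commute)
  then show "B k *v (\<Sum>i\<in>UNIV. y i *s c i) = 0"
    using assms(3) by simp
qed

lemma maximal_order_basis_leading_independent:
  fixes B :: "int \<Rightarrow> 'a::field_char_0^'n^'n"
  assumes indicial: "\<And>c m. vanishes_below B c m \<Longrightarrow> R *v (B m *v c) = of_int m *s (B m *v c)"
    and max: "maximal_order_basis B K c m"
  shows "independent_family (\<lambda>i. B (m i) *v c i)"
  unfolding independent_family_def
proof (rule ccontr)
  assume "\<not> (\<forall>x. (\<Sum>i\<in>UNIV. x i *s (B (m i) *v c i)) = 0 \<longrightarrow> (\<forall>i. x i = 0))"
  then obtain x i0 where "(\<Sum>i\<in>UNIV. x i *s (B (m i) *v c i)) = 0" "x i0 \<noteq> 0"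
    by blast
  moreover have "R *v (B (m i) *v c i) = of_int (m i) *s (B (m i) *v c i)" for i
    using indicial max by (simp add: maximal_order_basis_def order_basis_def)
  ultimately obtain y j where rel: "(\<Sum>i\<in>UNIV. y i *s (B (m i) *v c i)) = 0" "y j \<noteq> 0"
    and "\<forall>i. y i \<noteq> 0 \<longrightarrow> (of_int (m i) :: 'a) = of_int (m j)"
    using eigenvector_relation_single_eigenvalue[of R "\<lambda>i. B (m i) *v c i" "\<lambda>i. of_int (m i)"]
    by blast
  then have single: "y i \<noteq> 0 \<Longrightarrow> m i = m j" for i
    using of_int_eq_iff[where 'a='a] by blast
  have "vanishes_below B (\<Sum>i\<in>UNIV. y i *s c i) (m j + 1)"
    using max single rel(1)
    by (intro vanishes_below_equal_order_combination) (auto simp: maximal_order_basis_def order_basis_def)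
  moreover have "independent_family (c(j := \<Sum>i\<in>UNIV. y i *s c i))"
    using max rel(2)
    by (intro independent_family_update) (simp_all add: maximal_order_basis_def order_basis_def)
  ultimately show False
    using maximal_order_basis_not_raisable[OF max] by blast
qed

definition int_diagonalizable :: "'a::ring_1^'n^'n \<Rightarrow> bool" where
  "int_diagonalizable R \<longleftrightarrow>
     (\<exists>L (m::'n \<Rightarrow> int). invertible L \<and> (\<forall>i. R *v column i L = of_int (m i) *s column i L))"

lemma int_diagonalizable_if_indicial:
  fixes B :: "int \<Rightarrow> complex^'n^'n" and R :: "complex^'n^'n"
  assumes "\<And>c m. vanishes_below B c m \<Longrightarrow> R *v (B m *v c) = of_int m *s (B m *v c)"
    and "\<And>c. c \<noteq> 0 \<Longrightarrow> \<exists>k. B k *v c \<noteq> 0"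
    and "\<And>k. k < K \<Longrightarrow> B k = 0"
  shows "int_diagonalizable R"
proof -
  obtain c m where max: "maximal_order_basis B K c m"
    using maximal_order_basis_exists assms(2,3) by blast
  define L where "L = transpose (\<chi> i. B (m i) *v c i)"
  have col: "column i L = B (m i) *v c i" for i
    by (simp add: L_def row_def)
  have "invertible L"
    using maximal_order_basis_leading_independent[OF assms(1) max]
    by (simp add: invertible_iff_independent_columns col)
  moreover have "R *v column i L = of_int (m i) *s column i L" for i
    using assms(1) max by (simp add: col maximal_order_basis_def order_basis_def)
  ultimately show ?thesis
    unfolding int_diagonalizable_def by blast
qed

section \<open>Matrices with a basis of eigenvectors\<close>

text \<open>On \<open>'a^'n^'n\<close> the operator \<open>^\<close> is the componentwise power, so the matrix power is
  defined separately.\<close>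

primrec matrix_pow :: "'a::semiring_1^'n^'n \<Rightarrow> nat \<Rightarrow> 'a^'n^'n" where
  "matrix_pow M 0 = mat 1"
| "matrix_pow M (Suc k) = M ** matrix_pow M k"

definition diag_matrix :: "('n \<Rightarrow> 'a::zero) \<Rightarrow> 'a^'n^'n" where
  "diag_matrix d = (\<chi> i j. if i = j then d i else 0)"

lemma matrix_pow_diag_matrix:
  "matrix_pow (diag_matrix d) k = diag_matrix (\<lambda>i. d i ^ k)"
proof (induction k)
  case 0
  then show ?case
    by (simp add: diag_matrix_def mat_def)
next
  case (Suc k)
  have "(\<Sum>c\<in>UNIV. (if a = c then d a else 0) * (if c = b then d c ^ k else 0))
      = (\<Sum>c\<in>UNIV. if c = a then (if a = b then d a ^ Suc k else 0) else 0)" for a b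
    by (intro sum.cong) auto
  with Suc show ?case
    by (simp add: diag_matrix_def matrix_matrix_mult_def vec_eq_iff)
qed

lemma matrix_mult_eigencolumns:
  fixes R L :: "'a::comm_semiring_1^'n^'n"
  assumes "\<And>i. R *v column i L = d i *s column i L"
  shows "R ** L = L ** diag_matrix d"
proof -
  have "(R ** L) $ a $ b = (R *v column b L) $ a" for a b
    by (simp add: matrix_matrix_mult_def matrix_vector_mult_def column_def)
  moreover have "(L ** diag_matrix d) $ a $ b = d b * L $ a $ b" for a b
    by (simp add: matrix_matrix_mult_def diag_matrix_def if_distrib mult.commute cong: if_cong)
  ultimately show ?thesis
    using assms by (simp add: vec_eq_iff column_def)
qed

lemma eigenvalue_iff_eigencolumns:
  fixes R L :: "complex^'n^'n"
  assumes "invertible L" and eigen: "\<And>i. R *v column i L = d i *s column i L"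
  shows "mat_eigenvalue R l \<longleftrightarrow> l \<in> range d"
proof
  have ind: "independent_family (\<lambda>i. column i L)"
    using \<open>invertible L\<close> by (simp add: invertible_iff_independent_columns)
  assume "mat_eigenvalue R l"
  then obtain v where "v \<noteq> 0" "R *v v = l *s v"
    unfolding mat_eigenvalue_def by blast
  obtain z where z: "v = L *v z"
    using \<open>invertible L\<close> by (metis invertible_def matrix_vector_mul_assoc matrix_vector_mul_lid)
  with \<open>v \<noteq> 0\<close> obtain b where "z $ b \<noteq> 0"
    by (metis matrix_vector_mult_0_right vec_eq_iff zero_index)
  have Lz: "L *v z = (\<Sum>i\<in>UNIV. z $ i *s column i L)"
    by (rule matrix_mult_sum)
  have "R *v v = (\<Sum>i\<in>UNIV. (d i * z $ i) *s column i L)"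
    by (simp add: z Lz vec.sum vector_scalar_commute eigen vector_smult_assoc mult.commute)
  moreover have "l *s v = (\<Sum>i\<in>UNIV. (l * z $ i) *s column i L)"
    by (simp add: z Lz vec.scale_sum_right vector_smult_assoc)
  ultimately have "(\<Sum>i\<in>UNIV. ((d i - l) * z $ i) *s column i L) = R *v v - l *s v"
    by (simp add: left_diff_distrib vector_sub_rdistrib sum_subtractf)
  also have "\<dots> = 0"
    using \<open>R *v v = l *s v\<close> by simp
  finally have "(d b - l) * z $ b = 0"
    using ind[unfolded independent_family_def, rule_format, of "\<lambda>i. (d i - l) * z $ i"] by simp
  with \<open>z $ b \<noteq> 0\<close> show "l \<in> range d"
    by auto
next
  assume "l \<in> range d"
  then obtain b where "l = d b"
    by blast
  moreover have "column b L \<noteq> 0"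
    using \<open>invertible L\<close> independent_family_nonzero[of "\<lambda>i. column i L" b]
    by (simp add: invertible_iff_independent_columns)
  ultimately show "mat_eigenvalue R l"
    unfolding mat_eigenvalue_def using eigen by blast
qed

lemma trace_matrix_pow_eigencolumns:
  fixes R L :: "'a::field^'n^'n"
  assumes "invertible L" and "\<And>i. R *v column i L = d i *s column i L"
  shows "trace (matrix_pow R k) = (\<Sum>i\<in>UNIV. d i ^ k)"
proof -
  obtain L' where LL': "L ** L' = mat 1" and L'L: "L' ** L = mat 1"
    using \<open>invertible L\<close> unfolding invertible_def by blast
  have RL: "R ** L = L ** diag_matrix d"
    using assms(2) by (rule matrix_mult_eigencolumns)
  have powRL: "matrix_pow R k ** L = L ** matrix_pow (diag_matrix d) k" for k
  proof (induction k)
    case (Suc k)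
    have "matrix_pow R (Suc k) ** L = R ** (matrix_pow R k ** L)"
      by (simp add: matrix_mul_assoc)
    also have "\<dots> = (R ** L) ** matrix_pow (diag_matrix d) k"
      by (simp add: Suc matrix_mul_assoc)
    also have "\<dots> = L ** matrix_pow (diag_matrix d) (Suc k)"
      by (simp add: RL matrix_mul_assoc)
    finally show ?case .
  qed simp
  have "trace (matrix_pow R k) = trace (matrix_pow R k ** L ** L')"
    by (simp flip: matrix_mul_assoc add: LL')
  also have "\<dots> = trace (L ** (matrix_pow (diag_matrix d) k ** L'))"
    by (simp add: powRL matrix_mul_assoc)
  also have "\<dots> = trace ((matrix_pow (diag_matrix d) k ** L') ** L)"
    by (rule trace_mul_sym)
  also have "\<dots> = trace (matrix_pow (diag_matrix d) k)"
    by (simp flip: matrix_mul_assoc add: L'L)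
  also have "\<dots> = (\<Sum>i\<in>UNIV. d i ^ k)"
    by (simp add: matrix_pow_diag_matrix trace_def) (simp add: diag_matrix_def)
  finally show ?thesis .
qed

section \<open>Integer spectra of continuous families\<close>

lemma int_diagonalizable_eigenvalues:
  fixes R :: "complex^'n^'n"
  assumes "int_diagonalizable R"
  obtains m :: "'n \<Rightarrow> int"
  where "{l. mat_eigenvalue R l} = of_int ` range m"
    and "\<And>k. trace (matrix_pow R k) = of_int (\<Sum>i\<in>UNIV. m i ^ k)"
proof -
  obtain L and m :: "'n \<Rightarrow> int"
    where "invertible L" and eigen: "\<And>i. R *v column i L = of_int (m i) *s column i L"
    using assms unfolding int_diagonalizable_def by blast
  have "{l. mat_eigenvalue R l} = range (\<lambda>i. of_int (m i))"
    using eigenvalue_iff_eigencolumns[OF \<open>invertible L\<close> eigen] by blast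
  moreover have "trace (matrix_pow R k) = of_int (\<Sum>i\<in>UNIV. m i ^ k)" for k
    using trace_matrix_pow_eigencolumns[OF \<open>invertible L\<close> eigen] by simp
  ultimately show ?thesis
    using that by (simp add: image_image)
qed

lemma int_diagonalizable_eigenvalue_Ints:
  fixes R :: "complex^'n^'n"
  assumes "int_diagonalizable R" and "mat_eigenvalue R l"
  shows "l \<in> \<int>"
  using assms by (metis (mono_tags) int_diagonalizable_eigenvalues Ints_of_int imageE mem_Collect_eq)

text \<open>The polynomial \<open>\<Prod>j. (X - b j)\<^sup>2\<close> vanishes on \<open>range b\<close> and is positive elsewhere, while
  by the power sum identities its values summed over \<open>a\<close> and over \<open>b\<close> agree.\<close>

lemma range_subset_if_power_sums_eq:
  fixes a b :: "'i::finite \<Rightarrow> 'a::linordered_idom"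
  assumes ps: "\<And>k. (\<Sum>i\<in>UNIV. a i ^ k) = (\<Sum>i\<in>UNIV. b i ^ k)"
  shows "range a \<subseteq> range b"
proof (rule ccontr)
  assume "\<not> range a \<subseteq> range b"
  then obtain i0 where i0: "a i0 \<notin> range b"
    by blast
  define p :: "'a poly" where "p = (\<Prod>j\<in>UNIV. [:- b j, 1:] ^ 2)"
  have p: "poly p x = (\<Prod>j\<in>UNIV. (x - b j) ^ 2)" for x
    by (simp add: p_def poly_prod)
  have sum_p: "(\<Sum>i\<in>UNIV. poly p (c i)) = (\<Sum>k\<le>degree p. coeff p k * (\<Sum>i\<in>UNIV. c i ^ k))" for c :: "'i \<Rightarrow> 'a"
    by (simp add: poly_altdef sum_distrib_left) (rule sum.swap)
  have "(\<Sum>i\<in>UNIV. poly p (a i)) = (\<Sum>i\<in>UNIV. poly p (b i))"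
    by (simp add: sum_p ps)
  also have "\<dots> = 0"
    by (rule sum.neutral) (auto simp: p prod_zero_iff)
  finally have "(\<Sum>i\<in>UNIV. poly p (a i)) = 0" .
  moreover have "0 \<le> poly p x" for x
    by (simp add: p prod_nonneg)
  moreover have "0 < poly p (a i0)"
    using i0 by (auto simp: p intro!: prod_pos)
  ultimately show False
    using member_le_sum[of i0 UNIV "\<lambda>i. poly p (a i)"] by simp
qed

lemma continuous_on_matrix_pow:
  fixes F :: "'a::topological_space \<Rightarrow> 'b::real_normed_algebra_1^'n^'n"
  assumes "\<And>i j. continuous_on S (\<lambda>x. F x $ i $ j)"
  shows "continuous_on S (\<lambda>x. matrix_pow (F x) k $ i $ j)"
proof (induction k arbitrary: i j)
  case 0
  then show ?case
    by (simp add: mat_def)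
next
  case (Suc k)
  then show ?case
    by (simp add: matrix_matrix_mult_def) (intro continuous_on_sum continuous_on_mult assms)
qed

lemma continuous_Ints_valued_constant:
  fixes f :: "'a::topological_space \<Rightarrow> 'b::real_normed_algebra_1"
  assumes "connected S" "continuous_on S f" "\<And>x. x \<in> S \<Longrightarrow> f x \<in> \<int>"
  shows "f constant_on S"
proof (rule continuous_discrete_range_constant[OF assms(1,2)])
  fix x
  assume "x \<in> S"
  have "1 \<le> norm (f y - f x)" if "y \<in> S" "f y \<noteq> f x" for y
  proof -
    obtain a b where "f y = of_int a" "f x = of_int b"
      using assms(3) \<open>x \<in> S\<close> \<open>y \<in> S\<close> by (metis Ints_cases)
    with \<open>f y \<noteq> f x\<close> show ?thesis
      by (simp flip: of_int_diff add: norm_of_int)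
  qed
  then show "\<exists>e>0. \<forall>y. y \<in> S \<and> f y \<noteq> f x \<longrightarrow> e \<le> norm (f y - f x)"
    using zero_less_one by blast
qed

lemma int_diagonalizable_family_eigenvalues_eq:
  fixes R :: "'a::topological_space \<Rightarrow> complex^'n^'n"
  assumes "connected S" and cont: "\<And>i j. continuous_on S (\<lambda>\<rho>. R \<rho> $ i $ j)"
    and diag: "\<And>\<rho>. \<rho> \<in> S \<Longrightarrow> int_diagonalizable (R \<rho>)"
    and "\<rho>1 \<in> S" "\<rho>2 \<in> S"
  shows "{l. mat_eigenvalue (R \<rho>1) l} = {l. mat_eigenvalue (R \<rho>2) l}"
proof -
  obtain m1 :: "'n \<Rightarrow> int" where eig1: "{l. mat_eigenvalue (R \<rho>1) l} = of_int ` range m1"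
    and tr1: "\<And>k. trace (matrix_pow (R \<rho>1) k) = of_int (\<Sum>i\<in>UNIV. m1 i ^ k)"
    using int_diagonalizable_eigenvalues diag \<open>\<rho>1 \<in> S\<close> by metis
  obtain m2 :: "'n \<Rightarrow> int" where eig2: "{l. mat_eigenvalue (R \<rho>2) l} = of_int ` range m2"
    and tr2: "\<And>k. trace (matrix_pow (R \<rho>2) k) = of_int (\<Sum>i\<in>UNIV. m2 i ^ k)"
    using int_diagonalizable_eigenvalues diag \<open>\<rho>2 \<in> S\<close> by metis
  have "(\<lambda>\<rho>. trace (matrix_pow (R \<rho>) k)) constant_on S" for k
  proof (rule continuous_Ints_valued_constant[OF \<open>connected S\<close>])
    show "continuous_on S (\<lambda>\<rho>. trace (matrix_pow (R \<rho>) k))"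
      unfolding trace_def by (intro continuous_on_sum continuous_on_matrix_pow cont)
    show "trace (matrix_pow (R \<rho>) k) \<in> \<int>" if "\<rho> \<in> S" for \<rho>
      using int_diagonalizable_eigenvalues[OF diag[OF that]] by (metis Ints_of_int)
  qed
  then have "(\<Sum>i\<in>UNIV. m1 i ^ k) = (\<Sum>i\<in>UNIV. m2 i ^ k)" for k
    using tr1 tr2 \<open>\<rho>1 \<in> S\<close> \<open>\<rho>2 \<in> S\<close> unfolding constant_on_def by (metis of_int_eq_iff)
  then have "range m1 = range m2"
    by (metis range_subset_if_power_sums_eq subset_antisym)
  then show ?thesis
    by (simp add: eig1 eig2)
qed

section \<open>Formal Laurent series\<close>

lemma fls_nth_fps_to_fls_mult_eq_0:
  fixes E :: "'a::idom fps"
  assumes "\<And>k. k < m \<Longrightarrow> fls_nth w k = 0" and "k < m"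
  shows "fls_nth (fps_to_fls E * w) k = 0"
proof (cases "fps_to_fls E * w = 0")
  case True
  show ?thesis
    unfolding True by simp
next
  case False
  then have "fls_subdegree (fps_to_fls E) + fls_subdegree w \<le> fls_subdegree (fps_to_fls E * w)"
    by (rule fls_mult_subdegree_ge)
  moreover have "0 \<le> fls_subdegree (fps_to_fls E)"
    by (rule fls_subdegree_ge0I) simp
  moreover have "m \<le> fls_subdegree w"
    using False assms(1) by (intro fls_subdegree_geI) auto
  ultimately show ?thesis
    using \<open>k < m\<close> by (intro fls_eq0_below_subdegree) linarith
qed

text \<open>Comparing the coefficients of \<open>t\<^bsup>m-1\<^esup>\<close> in \<open>w' = (R/t + E) w\<close> for a solution of order
  at least \<open>m\<close>.\<close>

lemma fls_indicial_equation:
  fixes w :: "'n::finite \<Rightarrow> 'a::field fls" and R :: "'a^'n^'n"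
  assumes ode: "\<And>i. fls_deriv (w i)
      = (\<Sum>k\<in>UNIV. (fls_const (R $ i $ k) * fls_X_intpow (-1) + fps_to_fls (E i k)) * w k)"
    and below: "\<And>i k. k < m \<Longrightarrow> fls_nth (w i) k = 0"
  shows "of_int m * fls_nth (w i) m = (\<Sum>k\<in>UNIV. R $ i $ k * fls_nth (w k) m)"
proof -
  have "of_int m * fls_nth (w i) m = fls_nth (fls_deriv (w i)) (m - 1)"
    by simp
  also have "\<dots> = (\<Sum>k\<in>UNIV. R $ i $ k * fls_nth (fls_X_intpow (-1) * w k) (m - 1)
      + fls_nth (fps_to_fls (E i k) * w k) (m - 1))"
    by (simp add: ode fls_nth_sum distrib_right mult.assoc)
  also have "\<dots> = (\<Sum>k\<in>UNIV. R $ i $ k * fls_nth (w k) m)"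
  proof -
    have "fls_nth (fps_to_fls (E i k) * w k) (m - 1) = 0" for k
      using below by (intro fls_nth_fps_to_fls_mult_eq_0[of m]) auto
    then show ?thesis
      by (simp only: fls_X_intpow_times_conv_shift) simp
  qed
  finally show ?thesis .
qed

section \<open>Laurent coefficients of a fundamental solution\<close>

definition laurent_coeff_matrix :: "(complex \<Rightarrow> complex^'n^'m) \<Rightarrow> complex \<Rightarrow> int \<Rightarrow> complex^'n^'m" where
  "laurent_coeff_matrix W x0 k = (\<chi> i j. fls_nth (laurent_expansion (\<lambda>x. W x $ i $ j) x0) k)"

definition laurent_column :: "(complex \<Rightarrow> complex^'n^'m) \<Rightarrow> complex \<Rightarrow> complex^'n \<Rightarrow> 'm \<Rightarrow> complex fls" where
  "laurent_column W x0 c i = (\<Sum>j\<in>UNIV. laurent_expansion (\<lambda>x. W x $ i $ j) x0 * fls_const (c $ j))"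

lemma fls_nth_laurent_column:
  "fls_nth (laurent_column W x0 c i) k = (laurent_coeff_matrix W x0 k *v c) $ i"
  by (simp add: laurent_column_def laurent_coeff_matrix_def matrix_vector_mult_def fls_nth_sum)

lemma laurent_coeff_matrix_eq_0_below: "\<exists>K. \<forall>k<K. laurent_coeff_matrix W x0 k = 0"
proof -
  define K where "K = Min (range (\<lambda>(i, j). fls_subdegree (laurent_expansion (\<lambda>x. W x $ i $ j) x0)))"
  have "laurent_coeff_matrix W x0 k = 0" if "k < K" for k
  proof -
    have "K \<le> fls_subdegree (laurent_expansion (\<lambda>x. W x $ i $ j) x0)" for i j
      unfolding K_def by (rule Min_le) (auto intro: image_eqI[of _ _ "(i, j)"])
    then have "fls_nth (laurent_expansion (\<lambda>x. W x $ i $ j) x0) k = 0" for i j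
      using that by (intro fls_eq0_below_subdegree) (meson less_le_trans)
    then show ?thesis
      by (simp add: laurent_coeff_matrix_def vec_eq_iff)
  qed
  then show ?thesis
    by blast
qed

context
  fixes W A0 :: "complex \<Rightarrow> complex^'n^'n" and R :: "complex^'n^'n" and x0 :: complex and r :: real
  assumes r: "r > 0"
    and fundamental: "fundamental_solution_on (\<lambda>x. mscale (1 / (x - x0)) R + A0 x) W (ball x0 r - {x0})"
    and holomorphic: "mat_holomorphic_on A0 (ball x0 r)"
    and not_essential: "\<And>i j. not_essential (\<lambda>x. W x $ i $ j) x0"
begin

lemma fundamental_column_has_laurent_expansion:
  "(\<lambda>t. (W (x0 + t) *v c) $ i) has_laurent_expansion laurent_column W x0 c i"
proof -
  have "isolated_singularity_at (\<lambda>x. W x $ i $ j) x0" for i j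
  proof -
    have "(\<lambda>x. W x $ i $ j) holomorphic_on ball x0 r - {x0}"
      using fundamental unfolding holomorphic_on_def fundamental_solution_on_def
      by (meson field_differentiable_at_within field_differentiable_def)
    then show ?thesis
      unfolding isolated_singularity_at_def using r by (auto simp: analytic_on_open open_Diff)
  qed
  then have "(\<lambda>t. W (x0 + t) $ i $ j) has_laurent_expansion laurent_expansion (\<lambda>x. W x $ i $ j) x0" for i j
    using not_essential by (rule not_essential_has_laurent_expansion)
  then show ?thesis
    unfolding laurent_column_def matrix_vector_mult_def
    by (simp add: vec_lambda_beta) (intro has_laurent_expansion_sum has_laurent_expansion_cmult_right)
qed

lemma column_has_field_derivative:
  assumes "x \<in> ball x0 r - {x0}"
  shows "((\<lambda>y. (W y *v c) $ i) has_field_derivative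
      (\<Sum>k\<in>UNIV. (R $ i $ k / (x - x0) + A0 x $ i $ k) * (W x *v c) $ k)) (at x)"
proof -
  let ?A = "mscale (1 / (x - x0)) R + A0 x"
  have "\<forall>i j. ((\<lambda>y. W y $ i $ j) has_field_derivative (?A ** W x) $ i $ j) (at x)"
    using fundamental assms unfolding fundamental_solution_on_def by blast
  then have "((\<lambda>y. \<Sum>j\<in>UNIV. W y $ i $ j * c $ j) has_field_derivative
      (\<Sum>j\<in>UNIV. (?A ** W x) $ i $ j * c $ j)) (at x)"
    by (intro DERIV_sum DERIV_cmult_right) auto
  moreover have "(\<Sum>j\<in>UNIV. (?A ** W x) $ i $ j * c $ j) = (?A *v (W x *v c)) $ i"
    unfolding matrix_vector_mul_assoc by (simp only: matrix_vector_mult_def vec_lambda_beta)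
  moreover have "\<dots> = (\<Sum>k\<in>UNIV. (R $ i $ k / (x - x0) + A0 x $ i $ k) * (W x *v c) $ k)"
    by (simp add: matrix_vector_mult_def mscale_def)
  ultimately show ?thesis
    by (simp add: matrix_vector_mult_def)
qed

lemma column_deriv_eventually_eq:
  "eventually (\<lambda>t. deriv (\<lambda>t. (W (x0 + t) *v c) $ i) t
     = (\<Sum>k\<in>UNIV. (R $ i $ k * t powi (-1) + A0 (x0 + t) $ i $ k) * (W (x0 + t) *v c) $ k)) (at 0)"
proof -
  have "eventually (\<lambda>t. t \<in> ball 0 r - {0}) (at 0)"
    using r by (intro eventually_at_in_open) auto
  then show ?thesis
  proof eventually_elim
    case (elim t)
    then have "x0 + t \<in> ball x0 r - {x0}"
      by (auto simp: dist_norm)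
    from column_has_field_derivative[OF this, of c i]
    have "((\<lambda>s. (W (x0 + s) *v c) $ i) has_field_derivative
        (\<Sum>k\<in>UNIV. (R $ i $ k / t + A0 (x0 + t) $ i $ k) * (W (x0 + t) *v c) $ k)) (at t)"
      by (simp add: DERIV_shift add.commute)
    then show ?case
      by (simp add: DERIV_imp_deriv power_int_minus divide_inverse)
  qed
qed

lemma fls_deriv_laurent_column:
  "fls_deriv (laurent_column W x0 c i) = (\<Sum>k\<in>UNIV.
     (fls_const (R $ i $ k) * fls_X_intpow (-1) + fps_to_fls (fps_expansion (\<lambda>x. A0 x $ i $ k) x0))
     * laurent_column W x0 c k)"
proof -
  have A0: "(\<lambda>t. A0 (x0 + t) $ i $ k)
      has_laurent_expansion fps_to_fls (fps_expansion (\<lambda>x. A0 x $ i $ k) x0)" for k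
  proof -
    have "(\<lambda>x. A0 x $ i $ k) analytic_on {x0}"
      using holomorphic r unfolding mat_holomorphic_on_def
      by (meson analytic_on_open analytic_on_subset centre_in_ball empty_subsetI insert_subset open_ball)
    then show ?thesis
      by (intro has_laurent_expansion_fps analytic_at_imp_has_fps_expansion)
  qed
  have exp: "(\<lambda>t. \<Sum>k\<in>UNIV. (R $ i $ k * t powi (-1) + A0 (x0 + t) $ i $ k) * (W (x0 + t) *v c) $ k)
      has_laurent_expansion (\<Sum>k\<in>UNIV. (fls_const (R $ i $ k) * fls_X_intpow (-1)
        + fps_to_fls (fps_expansion (\<lambda>x. A0 x $ i $ k) x0)) * laurent_column W x0 c k)"
    by (intro has_laurent_expansion_sum has_laurent_expansion_mult has_laurent_expansion_add
        has_laurent_expansion_cmult_left has_laurent_expansion_fps_X_power_int A0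
        fundamental_column_has_laurent_expansion)
  then have "deriv (\<lambda>t. (W (x0 + t) *v c) $ i) has_laurent_expansion (\<Sum>k\<in>UNIV.
      (fls_const (R $ i $ k) * fls_X_intpow (-1) + fps_to_fls (fps_expansion (\<lambda>x. A0 x $ i $ k) x0))
      * laurent_column W x0 c k)"
    using has_laurent_expansion_cong[OF column_deriv_eventually_eq[of c i] refl] by blast
  moreover have "deriv (\<lambda>t. (W (x0 + t) *v c) $ i) has_laurent_expansion fls_deriv (laurent_column W x0 c i)"
    by (intro has_laurent_expansion_deriv fundamental_column_has_laurent_expansion)
  ultimately show ?thesis
    using has_laurent_expansion_unique by blast
qed

lemma laurent_coeff_matrix_indicial:
  assumes "vanishes_below (laurent_coeff_matrix W x0) c m"
  shows "R *v (laurent_coeff_matrix W x0 m *v c) = of_int m *s (laurent_coeff_matrix W x0 m *v c)"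
proof -
  have "of_int m * fls_nth (laurent_column W x0 c i) m
      = (\<Sum>k\<in>UNIV. R $ i $ k * fls_nth (laurent_column W x0 c k) m)" for i
    by (rule fls_indicial_equation[OF fls_deriv_laurent_column])
      (use assms in \<open>simp add: vanishes_below_def fls_nth_laurent_column\<close>)
  then show ?thesis
    by (simp add: vec_eq_iff fls_nth_laurent_column matrix_vector_mult_def)
qed

lemma laurent_coeff_matrix_nonvanishing:
  assumes "c \<noteq> 0"
  shows "\<exists>k. laurent_coeff_matrix W x0 k *v c \<noteq> 0"
proof (rule ccontr)
  assume "\<nexists>k. laurent_coeff_matrix W x0 k *v c \<noteq> 0"
  then have "laurent_column W x0 c i = 0" for i
    by (intro fls_eqI) (simp add: fls_nth_laurent_column)
  then have "eventually (\<lambda>t. (W (x0 + t) *v c) $ i = 0) (at 0)" for i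
    using fundamental_column_has_laurent_expansion[of c i] unfolding has_laurent_expansion_def
    by (auto elim: eventually_mono)
  then have "eventually (\<lambda>t. W (x0 + t) *v c = 0) (at 0)"
    by (simp add: vec_eq_iff eventually_all_finite)
  moreover have "eventually (\<lambda>t. t \<in> ball 0 r - {0}) (at 0)"
    using r by (intro eventually_at_in_open) auto
  ultimately obtain t where "t \<in> ball 0 r - {0}" "W (x0 + t) *v c = 0"
    using eventually_happens'[OF at_neq_bot eventually_conj] by blast
  moreover have "invertible (W (x0 + t))"
    using fundamental \<open>t \<in> ball 0 r - {0}\<close> by (auto simp: fundamental_solution_on_def dist_norm)
  ultimately show False
    using \<open>c \<noteq> 0\<close> by (metis invertible_left_inverse matrix_left_invertible_ker)
qed

lemma fundamental_residue_int_diagonalizable: "int_diagonalizable R"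
proof -
  obtain K where "\<forall>k<K. laurent_coeff_matrix W x0 k = 0"
    using laurent_coeff_matrix_eq_0_below by blast
  then show ?thesis
    using int_diagonalizable_if_indicial laurent_coeff_matrix_indicial laurent_coeff_matrix_nonvanishing
    by blast
qed

end

lemma strong_regular_point_residue_int_diagonalizable:
  fixes A A0 :: "complex \<Rightarrow> complex^'n^'n"
  assumes "r > 0" and holomorphic: "mat_holomorphic_on A0 (ball x0 r)"
    and A: "\<And>x. x \<in> ball x0 r - {x0} \<Longrightarrow> A x = mscale (1 / (x - x0)) R + A0 x"
    and "strong_regular_point A x0"
  shows "int_diagonalizable R"
proof -
  obtain r1 and W :: "complex \<Rightarrow> complex^'n^'n"
    where "r1 > 0" and fundamental: "fundamental_solution_on A W (ball x0 r1 - {x0})"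
    and not_essential: "\<And>i j. not_essential (\<lambda>x. W x $ i $ j) x0"
    using \<open>strong_regular_point A x0\<close> unfolding strong_regular_point_def by blast
  define r' where "r' = min r r1"
  have "ball x0 r' \<subseteq> ball x0 r"
    by (simp add: r'_def subset_ball)
  then have holomorphic': "mat_holomorphic_on A0 (ball x0 r')"
    using holomorphic unfolding mat_holomorphic_on_def by (blast intro: holomorphic_on_subset)
  have "r' > 0"
    using \<open>r > 0\<close> \<open>r1 > 0\<close> by (simp add: r'_def)
  have fundamental': "fundamental_solution_on (\<lambda>x. mscale (1 / (x - x0)) R + A0 x) W (ball x0 r' - {x0})"
    unfolding fundamental_solution_on_def
  proof
    fix x
    assume "x \<in> ball x0 r' - {x0}"
    then have "x \<in> ball x0 r1 - {x0}" "x \<in> ball x0 r - {x0}"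
      by (auto simp: r'_def)
    with fundamental have "invertible (W x) \<and>
        (\<forall>i j. ((\<lambda>y. W y $ i $ j) has_field_derivative (A x ** W x) $ i $ j) (at x))"
      unfolding fundamental_solution_on_def by blast
    with A[OF \<open>x \<in> ball x0 r - {x0}\<close>] show "invertible (W x) \<and> (\<forall>i j. ((\<lambda>y. W y $ i $ j) has_field_derivative
        ((mscale (1 / (x - x0)) R + A0 x) ** W x) $ i $ j) (at x))"
      by simp
  qed
  show ?thesis
    by (rule fundamental_residue_int_diagonalizable[OF \<open>r' > 0\<close> fundamental' holomorphic' not_essential])
qed

theorem proposition5p1:
  fixes P Q P0 Q0 :: "complex \<Rightarrow> complex^'n^'n"
    and pm1 qm1 :: "complex^'n^'n"
    and x0 :: complex and r :: real
  assumes "r > 0"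
    and "mat_holomorphic_on P0 (ball x0 r)"
    and "mat_holomorphic_on Q0 (ball x0 r)"
    and "\<And>x. x \<in> ball x0 r - {x0} \<Longrightarrow> P x = mscale (1 / (x - x0)) pm1 + P0 x"
    and "\<And>x. x \<in> ball x0 r - {x0} \<Longrightarrow> Q x = mscale (1 / (x - x0)) qm1 + Q0 x"
    and "\<And>\<rho>::complex. strong_regular_point (\<lambda>x. P x + mscale \<rho> (Q x)) x0"
  shows "(\<forall>\<rho>::complex. \<forall>l. mat_eigenvalue (pm1 + mscale \<rho> qm1) l \<longrightarrow> l \<in> \<int>)
       \<and> (\<forall>\<rho>1 \<rho>2::complex. {l. mat_eigenvalue (pm1 + mscale \<rho>1 qm1) l}
                         = {l. mat_eigenvalue (pm1 + mscale \<rho>2 qm1) l})"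
proof -
  have "int_diagonalizable (pm1 + mscale \<rho> qm1)" for \<rho>
  proof (rule strong_regular_point_residue_int_diagonalizable[OF \<open>r > 0\<close> _ _ assms(6)])
    show "mat_holomorphic_on (\<lambda>x. P0 x + mscale \<rho> (Q0 x)) (ball x0 r)"
      using assms(2,3) by (simp add: mat_holomorphic_on_def mscale_def holomorphic_intros)
    show "P x + mscale \<rho> (Q x) = mscale (1 / (x - x0)) (pm1 + mscale \<rho> qm1) + (P0 x + mscale \<rho> (Q0 x))"
      if "x \<in> ball x0 r - {x0}" for x
      using assms(4,5)[OF that] by (simp add: mscale_def vec_eq_iff algebra_simps)
  qed
  moreover have "continuous_on UNIV (\<lambda>\<rho>. (pm1 + mscale \<rho> qm1) $ i $ j)" for i j
    by (simp add: mscale_def) (intro continuous_intros)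
  ultimately show ?thesis
    using int_diagonalizable_eigenvalue_Ints
      int_diagonalizable_family_eigenvalues_eq[OF connected_UNIV, of "\<lambda>\<rho>. pm1 + mscale \<rho> qm1"]
    by blast
qed

end
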